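(* Let $\lambda$ be a dominant integral weight of $\mathfrak{sl}_{r+1}$ and $b\in\mathcal B(\lambda+\rho)$. For $1\le j\le i\le r$, the entry $a_{i,j}$ of the BZL path $\psi_{\mathbf i}(b)$ is circled by rule (C-I) if and only if the corresponding entry $\mathbf a_{i-j+1,i}$ of $\mathbf a(b)$ is circled by rule (C-II).
   Context: Fix $r\ge1$ and $\mathfrak g=\mathfrak{sl}_{r+1}$ with index set $I=\{1,\dots,r\}$, simple roots $\alpha_1,\dots,\alpha_r$, fundamental weights $\omega_1,\dots,\omega_r$, $N=r(r+1)/2$, and $\rho=\sum_i\omega_i$. For a dominant integral weight $\mu=\sum_i m_i\omega_i$, $\mathcal B(\mu)$ is identified (Kashiwara–Nakashima) with the set of semistandard Young tableaux with entries in $\{1,\dots,r+1\}$ of the shape having $m_i$ columns of height $i$; an entry equal to $k$ is a $k$-box. A tableau is identified with the tensor product of its entries read column by column from right to left, each column top to bottom, and $\tilde e_i,\tilde f_i$ act by the signature rule: for each factor write $-$ if it equals $i+1$, $+$ if it equals $i$; repeatedly cancel adjacent $+-$ pairs; $\tilde e_i$ changes the factor of the rightmost remaining $-$ from $i+1$ to $i$ (giving $0$ if none), $\tilde f_i$ changes the factor of the leftmost remaining $+$ from $i$ to $i+1$ (giving $0$ if none). Fix the long word $\mathbf i=(i_1,\dots,i_N)=(1,2,1,3,2,1,\dots,r,\dots,2,1)$. The BZL path $\psi_{\mathbf i}(b)=(a_1,\dots,a_N)$: $a_k$ is maximal with $\tilde e_{i_k}^{a_k}\cdots\tilde e_{i_1}^{a_1}b\ne0$.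 Triangular form: $a_{i,j}=a_{i(i-1)/2+j}$ for $1\le j\le i\le r$. Rule (C-I): circle $a_{i,j}$ if $a_{i,j}=a_{i,j+1}$, with the convention $a_{i,i+1}=0$. For $1\le i\le j\le r$, $\mathbf a_{i,j}$ is the number of $(j+1)$-boxes in rows $1$ through $i$ of $b$, with convention $\mathbf a_{0,j}=0$; $\mathbf a(b)=(\mathbf a_{i,j})$. Rule (C-II): circle $\mathbf a_{i,j}$ if $\mathbf a_{i,j}=\mathbf a_{i-1,j}$. *)

theory Defs
  imports Main
begin

text \<open>A tableau is a list of columns, ordered left to right; each column is the
list of its entries from top to bottom. For a dominant weight with coefficients
m k (k = 1..r), the shape has m k columns of height k, the tallest columns
being on the left.\<close>

definition col_heights :: "nat \<Rightarrow> (nat \<Rightarrow> nat) \<Rightarrow> nat list" where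
  "col_heights r m = concat (map (\<lambda>k. replicate (m k) k) (rev [1..<r+1]))"

definition SSYT :: "nat \<Rightarrow> (nat \<Rightarrow> nat) \<Rightarrow> nat list list set" where
  "SSYT r m = {T. map length T = col_heights r m
      \<and> (\<forall>c\<in>set T. \<forall>x\<in>set c. 1 \<le> x \<and> x \<le> r + 1)
      \<and> (\<forall>c\<in>set T. sorted_wrt (<) c)
      \<and> (\<forall>p. Suc p < length T \<longrightarrow>
            (\<forall>k < length (T ! Suc p). T ! p ! k \<le> T ! Suc p ! k))}"

definition read_word :: "nat list list \<Rightarrow> nat list" where
  "read_word T = concat (rev T)"

fun refill :: "nat list \<Rightarrow> 'a list \<Rightarrow> 'a list list" where
  "refill [] w = []"
| "refill (n # ns) w = take n w # refill ns (drop n w)"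

text \<open>Inverse of the reading word for a fixed shape.\<close>
definition unread :: "nat list list \<Rightarrow> nat list \<Rightarrow> nat list list" where
  "unread T w = rev (refill (map length (rev T)) w)"

datatype sgn = Plus | Minus

definition signature :: "nat \<Rightarrow> nat list \<Rightarrow> (nat \<times> sgn) list" where
  "signature i w = map (\<lambda>p. (p, if w ! p = i then Plus else Minus))
      (filter (\<lambda>p. w ! p = i \<or> w ! p = i + 1) [0..<length w])"

text \<open>Cancellation of adjacent (+,-) pairs (+ to the left of -), performed
with a stack (the result does not depend on the cancellation order).\<close>
fun reduce_aux :: "(nat \<times> sgn) list \<Rightarrow> (nat \<times> sgn) list \<Rightarrow> (nat \<times> sgn) list" where
  "reduce_aux [] st = rev st"
| "reduce_aux ((p, Minus) # xs) ((q, Plus) # st) = reduce_aux xs st"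
| "reduce_aux (x # xs) st = reduce_aux xs (x # st)"

definition reduced_sig :: "nat \<Rightarrow> nat list \<Rightarrow> (nat \<times> sgn) list" where
  "reduced_sig i w = reduce_aux (signature i w) []"

text \<open>Kashiwara operator e_i on words: change the rightmost remaining - from
i+1 to i; None (= 0) if there is none.\<close>
definition e_word :: "nat \<Rightarrow> nat list \<Rightarrow> nat list option" where
  "e_word i w = (let ps = map fst (filter (\<lambda>x. snd x = Minus) (reduced_sig i w)) in
     if ps = [] then None else Some (w[last ps := i]))"

definition e_tab :: "nat \<Rightarrow> nat list list \<Rightarrow> nat list list option" where
  "e_tab i T = map_option (unread T) (e_word i (read_word T))"

definition e_pow :: "nat \<Rightarrow> nat \<Rightarrow> nat list list \<Rightarrow> nat list list option" where
  "e_pow i n T = ((\<lambda>x. Option.bind x (e_tab i)) ^^ n) (Some T)"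

definition eps :: "nat \<Rightarrow> nat list list \<Rightarrow> nat" where
  "eps i T = (GREATEST a. e_pow i a T \<noteq> None)"

fun bzl_aux :: "nat list \<Rightarrow> nat list list \<Rightarrow> nat list" where
  "bzl_aux [] T = []"
| "bzl_aux (i # is) T = (let a = eps i T in a # bzl_aux is (the (e_pow i a T)))"

definition long_word :: "nat \<Rightarrow> nat list" where
  "long_word r = concat (map (\<lambda>k. rev [1..<k+1]) [1..<r+1])"

definition bzl :: "nat \<Rightarrow> nat list list \<Rightarrow> nat list" where
  "bzl r T = bzl_aux (long_word r) T"

text \<open>Triangular entry a_{i,j} = a_{i(i-1)/2+j} (1-indexed).\<close>
definition bzl_entry :: "nat \<Rightarrow> nat list list \<Rightarrow> nat \<Rightarrow> nat \<Rightarrow> nat" where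
  "bzl_entry r T i j = bzl r T ! (i * (i - 1) div 2 + j - 1)"

text \<open>Rule (C-I), with the convention a_{i,i+1} = 0.\<close>
definition circled_CI :: "nat \<Rightarrow> nat list list \<Rightarrow> nat \<Rightarrow> nat \<Rightarrow> bool" where
  "circled_CI r T i j = (bzl_entry r T i j = (if j = i then 0 else bzl_entry r T i (j + 1)))"

text \<open>bold a_{i,j}: number of (j+1)-boxes in rows 1..i (so bold a_{0,j} = 0).\<close>
definition bold_a :: "nat list list \<Rightarrow> nat \<Rightarrow> nat \<Rightarrow> nat" where
  "bold_a T i j = sum_list (map (\<lambda>c. length (filter (\<lambda>x. x = j + 1) (take i c))) T)"

definition circled_CII :: "nat list list \<Rightarrow> nat \<Rightarrow> nat \<Rightarrow> bool" where
  "circled_CII T i j = (bold_a T i j = bold_a T (i - 1) j)"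

end

theory Submission
  imports Defs
begin

text \<open>
  The long word is the concatenation of the blocks (i, i-1, ..., 1),
  i = 1..r, and the tableau reached from T at every point of the BZL process has an
  explicit description: inside block i, just before the letter k is applied, every
  entry x \<le> i in row p has been lowered to p, and an entry i+1 in row p has been
  lowered to max p (k+1). In the reading word of that tableau, all letters k+1
  affected by e_k precede a part whose k-signature cancels completely, so the
  e_k-string just lowers all of them; their number is the number of (i+1)-boxes in
  rows 1..k, i.e. bold_a T k i. Hence the BZL path is the concatenation of the lists
  (bold_a T i i, ..., bold_a T 1 i), so a_{i,j} = bold_a T (i-j+1) i, and rules
  (C-I) and (C-II) become literally the same condition.
\<close>

lemma signature_append:
  "signature i (xs @ ys) = signature i xs @ map (\<lambda>(p,s). (p + length xs, s)) (signature i ys)"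
proof -
  have upt: "[0..<length (xs@ys)] = [0..<length xs] @ map (\<lambda>p. p + length xs) [0..<length ys]"
    using upt_add_eq_append[of 0 "length xs" "length ys"] by (simp add: map_add_upt add.commute)
  have left: "filter (\<lambda>p. (xs@ys) ! p = i \<or> (xs@ys) ! p = i + 1) [0..<length xs]
     = filter (\<lambda>p. xs ! p = i \<or> xs ! p = i + 1) [0..<length xs]"
    by (rule filter_cong) (auto simp: nth_append)
  have right: "filter (\<lambda>p. (xs@ys) ! p = i \<or> (xs@ys) ! p = i + 1) (map (\<lambda>p. p + length xs) [0..<length ys])
     = map (\<lambda>p. p + length xs) (filter (\<lambda>p. ys ! p = i \<or> ys ! p = i + 1) [0..<length ys])"
    by (simp add: filter_map o_def nth_append)
  show ?thesis
    unfolding signature_def upt filter_append left right by (auto simp: nth_append)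
qed

lemma signature_Nil [simp]: "signature i [] = []"
  by (simp add: signature_def)

lemma signature_cons:
  "signature i (x # xs) = (if x = i then [(0,Plus)] else if x = Suc i then [(0,Minus)] else [])
     @ map (\<lambda>(p,s). (p + 1, s)) (signature i xs)"
  using signature_append[of i "[x]" xs] by (simp add: signature_def)

lemma signature_empty: "\<forall>x\<in>set xs. x \<noteq> i \<and> x \<noteq> Suc i \<Longrightarrow> signature i xs = []"
  unfolding signature_def by (auto simp: filter_empty_conv)

lemma signature_all_Minus: "k \<notin> set u \<Longrightarrow> \<forall>x\<in>set (signature k u). snd x = Minus"
  unfolding signature_def by auto

lemma signature_all_Plus: "Suc k \<notin> set u \<Longrightarrow> \<forall>x\<in>set (signature k u). snd x = Plus"
  unfolding signature_def by (auto, metis nth_mem)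

text \<open>A signature composed of blocks + and + -: in the cancellation every - is
  matched with the + immediately before it, so no - survives.\<close>
fun plus_blocks :: "(nat \<times> sgn) list \<Rightarrow> bool" where
  "plus_blocks [] = True"
| "plus_blocks ((p, Minus) # xs) = False"
| "plus_blocks ((p, Plus) # (q, Minus) # xs) = plus_blocks xs"
| "plus_blocks ((p, Plus) # xs) = plus_blocks xs"

lemma plus_blocks_shift: "plus_blocks (map (\<lambda>(p,s). (p + n, s)) xs) = plus_blocks xs"
  by (induction xs rule: plus_blocks.induct) auto

lemma plus_blocks_shift_Suc: "plus_blocks (map (\<lambda>(p,s). (Suc p, s)) xs) = plus_blocks xs"
  using plus_blocks_shift[of 1 xs] by simp

lemma plus_blocks_Plus_cons: "plus_blocks ys \<Longrightarrow> plus_blocks ((p,Plus) # ys)"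
  by (cases ys rule: plus_blocks.cases) auto

lemma plus_blocks_append: "plus_blocks xs \<Longrightarrow> plus_blocks ys \<Longrightarrow> plus_blocks (xs @ ys)"
  by (induction xs rule: plus_blocks.induct) (auto intro: plus_blocks_Plus_cons)

lemma plus_blocks_all_Plus: "\<forall>x\<in>set xs. snd x = Plus \<Longrightarrow> plus_blocks xs"
  by (induction xs rule: plus_blocks.induct) (auto intro: plus_blocks_Plus_cons)

lemma plus_blocks_concat:
  "\<forall>x\<in>set xs. plus_blocks (signature k x) \<Longrightarrow> plus_blocks (signature k (concat xs))"
  by (induction xs) (auto simp: signature_append plus_blocks_shift intro!: plus_blocks_append)

lemma reduce_plus_blocks: "plus_blocks ys \<Longrightarrow>
  filter (\<lambda>x. snd x = Minus) (reduce_aux ys st) = filter (\<lambda>x. snd x = Minus) (rev st)"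
  by (induction ys arbitrary: st rule: plus_blocks.induct) auto

text \<open>A leading run of minuses is never cancelled; it is pushed onto the stack.\<close>
lemma reduce_leading_Minus:
  assumes "\<forall>x\<in>set ms. snd x = Minus" "st = [] \<or> snd (hd st) = Minus"
  shows "reduce_aux (ms @ ys) st = reduce_aux ys (rev ms @ st)"
  using assms
proof (induction ms arbitrary: st)
  case Nil then show ?case by simp
next
  case (Cons m ms)
  then obtain p where m: "m = (p, Minus)" by (cases m) auto
  have "reduce_aux ((p,Minus) # (ms @ ys)) st = reduce_aux (ms @ ys) ((p,Minus) # st)"
    using Cons.prems(2) by (cases st rule: list.exhaust; cases "hd st") auto
  also have "\<dots> = reduce_aux ys (rev ms @ (p,Minus) # st)"
    using Cons.IH[of "(p,Minus) # st"] Cons.prems(1) by simp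
  finally show ?case using m by simp
qed

lemma e_word_plus_blocks: "plus_blocks (signature k v) \<Longrightarrow> e_word k v = None"
  unfolding e_word_def reduced_sig_def Let_def
  using reduce_plus_blocks[of "signature k v" "[]"] by simp

lemma e_word_lowers_last:
  assumes "k \<notin> set a" "plus_blocks (signature k v)"
  shows "e_word k (a @ Suc k # v) = Some (a @ k # v)"
proof -
  define ms where "ms = signature k a @ [(length a, Minus)]"
  define ys where "ys = map (\<lambda>(p,s). (p + length a, s)) (map (\<lambda>(p,s). (p+1, s)) (signature k v))"
  have sig: "signature k (a @ Suc k # v) = ms @ ys"
    unfolding ms_def ys_def by (simp add: signature_append signature_cons)
  have minus: "\<forall>x\<in>set ms. snd x = Minus"
    using signature_all_Minus[OF assms(1)] unfolding ms_def by auto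
  have "plus_blocks ys" unfolding ys_def plus_blocks_shift using assms(2) .
  then have "filter (\<lambda>x. snd x = Minus) (reduced_sig k (a @ Suc k # v)) = ms"
    unfolding reduced_sig_def sig reduce_leading_Minus[OF minus, of "[]", simplified]
    using reduce_plus_blocks minus by simp
  then show ?thesis unfolding e_word_def Let_def ms_def by (simp add: list_update_append)
qed

definition e_word_pow :: "nat \<Rightarrow> nat \<Rightarrow> nat list \<Rightarrow> nat list option" where
  "e_word_pow k n w = ((\<lambda>x. Option.bind x (e_word k)) ^^ n) (Some w)"

lemma e_word_pow_0 [simp]: "e_word_pow k 0 w = Some w"
  unfolding e_word_pow_def by simp

lemma e_word_pow_Suc: "e_word_pow k (Suc n) w = Option.bind (e_word_pow k n w) (e_word k)"
  unfolding e_word_pow_def by simp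

lemma e_word_pow_Suc_right: "e_word k w = Some w' \<Longrightarrow> e_word_pow k (Suc n) w = e_word_pow k n w'"
  unfolding e_word_pow_def by (simp only: funpow_Suc_right o_def) simp

lemma e_word_pow_None_mono: "e_word_pow k n w = None \<Longrightarrow> n \<le> m \<Longrightarrow> e_word_pow k m w = None"
  by (induction m) (auto simp: e_word_pow_Suc le_Suc_eq)

lemma e_word_length: "e_word k w = Some w' \<Longrightarrow> length w' = length w"
  unfolding e_word_def Let_def by (auto split: if_splits)

lemma e_word_pow_length: "e_word_pow k n w = Some w' \<Longrightarrow> length w' = length w"
proof (induction n arbitrary: w')
  case (Suc n)
  then obtain w1 where "e_word_pow k n w = Some w1" "e_word k w1 = Some w'"
    by (auto simp: e_word_pow_Suc bind_eq_Some_conv)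
  then show ?case using Suc.IH e_word_length by metis
qed simp

abbreviation lower :: "nat \<Rightarrow> nat list \<Rightarrow> nat list" where
  "lower k u \<equiv> map (\<lambda>x. if x = Suc k then k else x) u"

abbreviation count_letter :: "nat \<Rightarrow> nat list \<Rightarrow> nat" where
  "count_letter x u \<equiv> length (filter (\<lambda>y. y = x) u)"

lemma e_word_pow_lower:
  "k \<notin> set u \<Longrightarrow> plus_blocks (signature k v) \<Longrightarrow>
   e_word_pow k (count_letter (Suc k) u) (u @ v) = Some (lower k u @ v)"
proof (induction u arbitrary: v rule: rev_induct)
  case (snoc x u)
  have ku: "k \<notin> set u" using snoc.prems by simp
  show ?case
  proof (cases "x = Suc k")
    case True
    have cancelled: "plus_blocks (signature k (k # v))"
      using snoc.prems(2) by (simp add: signature_cons plus_blocks_shift_Suc plus_blocks_Plus_cons)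
    have "e_word_pow k (Suc (count_letter (Suc k) u)) (u @ Suc k # v)
        = e_word_pow k (count_letter (Suc k) u) (u @ k # v)"
      by (rule e_word_pow_Suc_right[OF e_word_lowers_last[OF ku snoc.prems(2)]])
    then show ?thesis using snoc.IH[OF ku cancelled] True by simp
  next
    case False
    have "plus_blocks (signature k (x # v))"
      using snoc.prems False by (simp add: signature_cons plus_blocks_shift_Suc)
    then show ?thesis using snoc.IH[OF ku] False by simp
  qed
qed simp

lemma e_word_pow_lower_stops:
  assumes "k \<notin> set u" "plus_blocks (signature k v)"
  shows "e_word_pow k (Suc (count_letter (Suc k) u)) (u @ v) = None"
proof -
  have "plus_blocks (signature k (lower k u @ v))"
    unfolding signature_append
    by (rule plus_blocks_append[OF plus_blocks_all_Plus], rule signature_all_Plus,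
        auto simp: plus_blocks_shift assms(2))
  then show ?thesis
    unfolding e_word_pow_Suc e_word_pow_lower[OF assms] by (simp add: e_word_plus_blocks)
qed

lemma refill_props:
  "sum_list ns = length w \<Longrightarrow> map length (refill ns w) = ns \<and> concat (refill ns w) = w"
  by (induction ns arbitrary: w) auto

lemma refill_concat: "refill (map length xs) (concat xs) = xs"
  by (induction xs) auto

lemma length_read_word: "length (read_word S) = sum_list (map length S)"
  unfolding read_word_def by (simp add: length_concat rev_map[symmetric] sum_list_rev)

lemma read_unread:
  assumes "length w = length (read_word S)"
  shows "read_word (unread S w) = w" "map length (unread S w) = map length S"
proof -
  have "sum_list (map length (rev S)) = length w"
    using assms length_read_word[of S] by (simp add: rev_map[symmetric] sum_list_rev)
  from refill_props[OF this] show "read_word (unread S w) = w" "map length (unread S w) = map length S"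
    unfolding unread_def read_word_def by (simp_all add: rev_map[symmetric])
qed

lemma unread_cong: "map length S' = map length S \<Longrightarrow> unread S' = unread S"
  unfolding unread_def by (simp add: rev_map[symmetric])

lemma unread_read: "map length S' = map length S \<Longrightarrow> unread S (read_word S') = S'"
  using refill_concat[of "rev S'"] unfolding unread_cong[symmetric]
  by (simp add: unread_def read_word_def rev_map[symmetric])

lemma e_pow_via_word: "e_pow k n S = map_option (unread S) (e_word_pow k n (read_word S))"
proof (induction n)
  case 0 then show ?case by (simp add: e_pow_def unread_read)
next
  case (Suc n)
  have step: "e_pow k (Suc n) S = Option.bind (e_pow k n S) (e_tab k)"
    unfolding e_pow_def by simp
  show ?case
  proof (cases "e_word_pow k n (read_word S)")
    case None then show ?thesis using step Suc by (simp add: e_word_pow_Suc)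
  next
    case (Some w')
    have l: "length w' = length (read_word S)" using e_word_pow_length[OF Some] .
    have "e_tab k (unread S w') = map_option (unread S) (e_word k w')"
      unfolding e_tab_def read_unread[OF l] unread_cong[OF read_unread(2)[OF l]] ..
    then show ?thesis using step Suc Some by (simp add: e_word_pow_Suc)
  qed
qed

lemma eps_e_pow_special:
  assumes "read_word S = u @ v" "k \<notin> set u" "plus_blocks (signature k v)"
    and "map length S' = map length S" "read_word S' = lower k u @ v"
  shows "eps k S = count_letter (Suc k) u" "the (e_pow k (eps k S) S) = S'"
proof -
  note lower = e_word_pow_lower[OF assms(2,3)] e_word_pow_lower_stops[OF assms(2,3)]
  have eps: "eps k S = count_letter (Suc k) u"
    unfolding eps_def
  proof (rule Greatest_equality)
    show "e_pow k (count_letter (Suc k) u) S \<noteq> None"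
      using lower(1) assms(1) by (simp add: e_pow_via_word)
  next
    fix y assume "e_pow k y S \<noteq> None"
    then show "y \<le> count_letter (Suc k) u"
      using e_word_pow_None_mono[OF lower(2), of y] assms(1)
      by (cases "y \<le> count_letter (Suc k) u") (auto simp: e_pow_via_word)
  qed
  show "eps k S = count_letter (Suc k) u" by (rule eps)
  show "the (e_pow k (eps k S) S) = S'"
    using lower(1) assms(1,5) unread_read[OF assms(4)] by (simp add: eps e_pow_via_word)
qed

section \<open>The intermediate tableaux of the BZL process\<close>

text \<open>The tableau reached inside the i-th block of the long word, just before the
  letter c-1 is applied (c = i+1 at the start of the block, c = 1 at its end):
  an entry x \<le> i in row p has been lowered to p and an entry i+1 in row p to
  max p c; larger entries are untouched.\<close>
definition stage_entry :: "nat \<Rightarrow> nat \<Rightarrow> nat \<Rightarrow> nat \<Rightarrow> nat" where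
  "stage_entry i c p x = (if x \<le> i then p else if x = Suc i then max p c else x)"

definition stage_col :: "nat \<Rightarrow> nat \<Rightarrow> nat list \<Rightarrow> nat list" where
  "stage_col i c col = map (\<lambda>p. stage_entry i c (Suc p) (col ! p)) [0..<length col]"

definition stage_tab :: "nat \<Rightarrow> nat \<Rightarrow> nat list list \<Rightarrow> nat list list" where
  "stage_tab i c T = map (stage_col i c) T"

lemma stage_col_length [simp]: "length (stage_col i c col) = length col"
  unfolding stage_col_def by simp

lemma stage_col_nth [simp]: "p < length col \<Longrightarrow> stage_col i c col ! p = stage_entry i c (Suc p) (col ! p)"
  unfolding stage_col_def by simp

lemma strict_col_nth_ge:
  assumes "sorted_wrt (<) col" "\<forall>x\<in>set col. 1 \<le> x" "p < length col"
  shows "Suc p \<le> col ! p"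
  using assms(3)
proof (induction p)
  case 0 then show ?case using assms(2) by (simp add: Suc_le_eq nth_mem)
next
  case (Suc p)
  have "col ! p < col ! Suc p" using sorted_wrt_nth_less[OF assms(1), of p "Suc p"] Suc.prems by simp
  then show ?case using Suc by simp
qed

text \<open>Hence entries x \<le> i+1 are already at their lowest value at the end of block i,
  which is also the start of block i+1; and nothing is lowered before block 1.\<close>
lemma stage_col_block_end:
  assumes "sorted_wrt (<) col" "\<forall>x\<in>set col. 1 \<le> x"
  shows "stage_col i 1 col = stage_col (Suc i) (Suc (Suc i)) col"
proof (rule nth_equalityI)
  fix p assume "p < length (stage_col i 1 col)"
  then have p: "p < length col" by simp
  then have "Suc p \<le> col ! p" using strict_col_nth_ge[OF assms] by blast
  then show "stage_col i 1 col ! p = stage_col (Suc i) (Suc (Suc i)) col ! p"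
    using p by (auto simp: stage_entry_def)
qed simp

lemma stage_col_start:
  assumes "sorted_wrt (<) col" "\<forall>x\<in>set col. 1 \<le> x"
  shows "stage_col 0 1 col = col"
proof (rule nth_equalityI)
  fix p assume "p < length (stage_col 0 1 col)"
  then have p: "p < length col" by simp
  then have "Suc p \<le> col ! p" using strict_col_nth_ge[OF assms] by blast
  then show "stage_col 0 1 col ! p = col ! p" using p by (auto simp: stage_entry_def)
qed simp

text \<open>The column has a k-th box, with entry at most i. During the step with letter k
  (inside block i) such a column is the part that is fully cancelled.\<close>
definition row_le :: "nat \<Rightarrow> nat \<Rightarrow> nat list \<Rightarrow> bool" where
  "row_le k i col = (k \<le> length col \<and> col ! (k - 1) \<le> i)"

lemma row_le_above:
  assumes "sorted_wrt (<) col" "row_le k i col" "p < k"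
  shows "col ! p \<le> i"
proof (cases "p = k - 1")
  case False
  then have "col ! p < col ! (k - 1)"
    using sorted_wrt_nth_less[OF assms(1), of p "k - 1"] assms(2,3) by (auto simp: row_le_def)
  then show ?thesis using assms(2) by (simp add: row_le_def)
qed (use assms(2) in \<open>simp add: row_le_def\<close>)

lemma not_row_le_below:
  assumes "sorted_wrt (<) col" "\<not> row_le k i col" "1 \<le> k" "p < length col"
  shows "k - 1 \<le> p \<Longrightarrow> Suc i \<le> col ! p" and "k \<le> p \<Longrightarrow> Suc (Suc i) \<le> col ! p"
proof -
  have at: "Suc i \<le> col ! (k - 1)" if "k - 1 < length col"
    using assms(2,3) that by (auto simp: row_le_def)
  show below: "Suc (Suc i) \<le> col ! p" if "k \<le> p"
  proof -
    have "col ! (k - 1) < col ! p"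
      using sorted_wrt_nth_less[OF assms(1), of "k - 1" p] that assms(3,4) by auto
    moreover have "k - 1 < length col" using that assms(4) by simp
    ultimately show ?thesis using at by simp
  qed
  show "Suc i \<le> col ! p" if "k - 1 \<le> p"
  proof (cases "p = k - 1")
    case False
    then have "Suc (Suc i) \<le> col ! p" using below that by simp
    then show ?thesis by simp
  qed (use at assms(4) in simp)
qed

lemma stage_col_not_row_le:
  assumes s: "sorted_wrt (<) col" and np: "\<not> row_le k i col" and k: "1 \<le> k" "k \<le> i"
  shows "k \<notin> set (stage_col i (Suc k) col)"
    "count_letter (Suc k) (stage_col i (Suc k) col) = count_letter (i + 1) (take k col)"
    "lower k (stage_col i (Suc k) col) = stage_col i k col"
proof -
  note bounds = not_row_le_below[OF s np k(1)]
  show "k \<notin> set (stage_col i (Suc k) col)"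
  proof
    assume "k \<in> set (stage_col i (Suc k) col)"
    then obtain p where p: "p < length col" "stage_entry i (Suc k) (Suc p) (col ! p) = k"
      by (auto simp: in_set_conv_nth)
    show False
      using bounds(1)[OF p(1)] bounds(2)[OF p(1)] p(2) k
      by (cases "k \<le> p") (auto simp: stage_entry_def split: if_splits)
  qed
  have "{p. p < length (stage_col i (Suc k) col) \<and> stage_col i (Suc k) col ! p = Suc k}
     = {p. p < length (take k col) \<and> take k col ! p = i + 1}"
  proof (rule Collect_cong)
    fix p
    show "(p < length (stage_col i (Suc k) col) \<and> stage_col i (Suc k) col ! p = Suc k) \<longleftrightarrow>
          (p < length (take k col) \<and> take k col ! p = i + 1)"
    proof (cases "p < length col")
      case p: True
      then show ?thesis
        using bounds(2)[OF p] k by (cases "k \<le> p") (auto simp: stage_entry_def nth_take)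
    qed simp
  qed
  then show "count_letter (Suc k) (stage_col i (Suc k) col) = count_letter (i + 1) (take k col)"
    unfolding length_filter_conv_card by simp
  show "lower k (stage_col i (Suc k) col) = stage_col i k col"
  proof (rule nth_equalityI)
    fix p assume "p < length (lower k (stage_col i (Suc k) col))"
    then have p: "p < length col" by simp
    show "lower k (stage_col i (Suc k) col) ! p = stage_col i k col ! p"
      using bounds(1)[OF p] bounds(2)[OF p] p k
      by (cases "k \<le> p") (auto simp: stage_entry_def)
  qed simp
qed

lemma stage_col_row_le:
  assumes s: "sorted_wrt (<) col" and pr: "row_le k i col" and k: "1 \<le> k"
  shows "stage_col i (Suc k) col = stage_col i k col"
    "count_letter (i + 1) (take k col) = 0"
proof -
  show "stage_col i (Suc k) col = stage_col i k col"
  proof (rule nth_equalityI)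
    fix p assume "p < length (stage_col i (Suc k) col)"
    then have p: "p < length col" by simp
    show "stage_col i (Suc k) col ! p = stage_col i k col ! p"
      using row_le_above[OF s pr, of p] p by (cases "k \<le> p") (auto simp: stage_entry_def)
  qed simp
  have "\<forall>x\<in>set (take k col). x \<noteq> i + 1"
  proof
    fix x assume "x \<in> set (take k col)"
    then obtain p where "p < k" "x = col ! p" by (auto simp: in_set_conv_nth)
    then show "x \<noteq> i + 1" using row_le_above[OF s pr] by fastforce
  qed
  then show "count_letter (i + 1) (take k col) = 0"
    by (simp add: filter_empty_conv)
qed

lemma stage_col_row_le_signature:
  assumes s: "sorted_wrt (<) col" and pr: "row_le k i col" and k: "1 \<le> k" "k \<le> i"
  shows "plus_blocks (signature k (stage_col i (Suc k) col))"
proof -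
  define w where "w = stage_col i (Suc k) col"
  have kl: "k - 1 < length w" and lw: "length w = length col"
    using pr k unfolding w_def row_le_def by auto
  have split: "w = take (k - 1) w @ w ! (k - 1) # drop k w"
    using id_take_nth_drop[OF kl] k by simp
  have wk: "w ! (k - 1) = k"
    unfolding w_def using pr k kl lw by (simp add: stage_entry_def row_le_def)
  have above: "signature k (take (k - 1) w) = []"
  proof (rule signature_empty, intro ballI)
    fix x assume "x \<in> set (take (k - 1) w)"
    then obtain p where p: "p < k - 1" "p < length col" "x = w ! p"
      using lw by (auto simp: in_set_conv_nth)
    then have "x = Suc p"
      unfolding w_def using row_le_above[OF s pr, of p] by (simp add: stage_entry_def)
    then show "x \<noteq> k \<and> x \<noteq> Suc k" using p(1) by linarith
  qed
  have far_below: "signature k (drop (Suc k) w) = []"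
  proof (rule signature_empty, intro ballI)
    fix x assume "x \<in> set (drop (Suc k) w)"
    then obtain q where q: "q < length w - Suc k" "x = w ! (Suc k + q)"
      by (auto simp: in_set_conv_nth)
    then have p: "Suc k \<le> Suc k + q" "Suc k + q < length col" "x = w ! (Suc k + q)"
      using lw by auto
    then show "x \<noteq> k \<and> x \<noteq> Suc k" unfolding w_def using k by (auto simp: stage_entry_def)
  qed
  obtain Y where Y: "signature k (drop k w) = Y" "Y = [] \<or> Y = [(0, Minus)]"
  proof (cases "k < length w")
    case True
    then have d: "drop k w = w ! k # drop (Suc k) w" by (simp add: Cons_nth_drop_Suc)
    have "w ! k \<noteq> k" unfolding w_def using True lw k by (auto simp: stage_entry_def)
    then show ?thesis using that unfolding d signature_cons far_below by auto
  qed (use that in \<open>simp add: signature_def\<close>)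
  have "signature k w = map (\<lambda>(p,s). (p + length (take (k - 1) w), s))
                          ((0, Plus) # map (\<lambda>(p,s). (p + 1, s)) Y)"
    by (subst split) (simp only: signature_append above wk signature_cons Y(1), simp)
  then show ?thesis unfolding w_def[symmetric] plus_blocks_shift using Y(2) by auto
qed

definition semistandard :: "nat list list \<Rightarrow> bool" where
  "semistandard T = ((\<forall>col\<in>set T. sorted_wrt (<) col \<and> (\<forall>x\<in>set col. 1 \<le> x)) \<and>
     (\<forall>p. Suc p < length T \<longrightarrow> length (T ! Suc p) \<le> length (T ! p) \<and>
        (\<forall>k<length (T ! Suc p). T ! p ! k \<le> T ! Suc p ! k)))"

lemma stage_tab_block_end:
  assumes "semistandard T"
  shows "stage_tab i 1 T = stage_tab (Suc i) (Suc (Suc i)) T"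
  unfolding stage_tab_def
proof (rule map_cong[OF refl])
  fix col assume "col \<in> set T"
  then show "stage_col i 1 col = stage_col (Suc i) (Suc (Suc i)) col"
    using assms stage_col_block_end unfolding semistandard_def by blast
qed

lemma stage_tab_start:
  assumes "semistandard T"
  shows "stage_tab 0 1 T = T"
  unfolding stage_tab_def
proof (rule map_idI)
  fix col assume "col \<in> set T"
  then show "stage_col 0 1 col = col"
    using assms stage_col_start unfolding semistandard_def by blast
qed

text \<open>Since rows increase and columns get shorter to the right, the columns with a
  small k-th box form an initial segment of the tableau.\<close>
lemma row_le_prefix:
  assumes T: "semistandard T" and k: "1 \<le> k"
    and col: "col \<in> set (dropWhile (row_le k i) T)"
  shows "\<not> row_le k i col"
proof
  assume col_le: "row_le k i col"
  define P where "P = length (takeWhile (row_le k i) T)"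
  from col obtain q where q: "q < length T - P" "col = T ! (P + q)"
    unfolding dropWhile_eq_drop P_def[symmetric] by (auto simp: in_set_conv_nth)
  have left: "row_le k i (T ! (P + d))"
    if d: "P + Suc d < length T" "row_le k i (T ! (P + Suc d))" for d
  proof -
    let ?c = "T ! (P + d)" and ?c' = "T ! Suc (P + d)"
    have len: "length ?c' \<le> length ?c" and rows: "\<forall>k'<length ?c'. ?c ! k' \<le> ?c' ! k'"
      using T d(1) unfolding semistandard_def by auto
    have c': "k \<le> length ?c'" "?c' ! (k - 1) \<le> i" using d(2) by (simp_all add: row_le_def)
    then have "k - 1 < length ?c'" using k by simp
    then have "?c ! (k - 1) \<le> i" using rows c'(2) by (meson le_trans)
    then show ?thesis using len c'(1) by (simp add: row_le_def)
  qed
  have to_first: "row_le k i (T ! P)" if "P + d < length T" "row_le k i (T ! (P + d))" for d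
    using that by (induction d) (use left in auto)
  have "row_le k i (T ! P)" using to_first[of q] q col_le by simp
  moreover have "P < length T" using q by simp
  ultimately show False using nth_length_takeWhile[of "row_le k i" T] unfolding P_def by simp
qed

text \<open>Splitting the tableau into the initial columns with a small k-th box (read
  last) and the remaining ones (read first) puts the stage word in the special
  shape required by eps_e_pow_special.\<close>
lemma stage_tab_word_split:
  assumes T: "semistandard T" and k: "1 \<le> k" "k \<le> i"
  obtains u v where "read_word (stage_tab i (Suc k) T) = u @ v" "k \<notin> set u"
    "plus_blocks (signature k v)" "count_letter (Suc k) u = bold_a T k i"
    "read_word (stage_tab i k T) = lower k u @ v"
proof -
  define L where "L = takeWhile (row_le k i) T"
  define R where "R = dropWhile (row_le k i) T"
  have LR: "T = L @ R" unfolding L_def R_def by simp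
  have sorted: "sorted_wrt (<) col" if "col \<in> set T" for col
    using T that unfolding semistandard_def by blast
  have L: "sorted_wrt (<) col \<and> row_le k i col" if "col \<in> set L" for col
    using that sorted unfolding L_def by (auto dest: set_takeWhileD)
  have R: "sorted_wrt (<) col \<and> \<not> row_le k i col" if "col \<in> set R" for col
    using that sorted row_le_prefix[OF T k(1)] unfolding R_def by (auto dest: set_dropWhileD)
  define u where "u = concat (rev (map (stage_col i (Suc k)) R))"
  define v where "v = concat (rev (map (stage_col i (Suc k)) L))"
  show thesis
  proof
    show "read_word (stage_tab i (Suc k) T) = u @ v"
      unfolding read_word_def stage_tab_def u_def v_def LR by simp
    show "k \<notin> set u"
      unfolding u_def using stage_col_not_row_le(1)[OF _ _ k] R by auto
    show "plus_blocks (signature k v)"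
      unfolding v_def using stage_col_row_le_signature[OF _ _ k] L
      by (intro plus_blocks_concat) auto
    have "count_letter (Suc k) u = (\<Sum>col\<leftarrow>R. count_letter (i + 1) (take k col))"
      unfolding u_def filter_concat length_concat
      by (simp add: sum_list_rev rev_map[symmetric] stage_col_not_row_le(2)[OF _ _ k] R cong: map_cong)
    moreover have "(\<Sum>col\<leftarrow>L. count_letter (i + 1) (take k col)) = 0"
      using stage_col_row_le(2)[OF _ _ k(1)] L by (simp add: sum_list_eq_0_iff)
    ultimately show "count_letter (Suc k) u = bold_a T k i"
      unfolding bold_a_def LR by simp
    have "lower k u = concat (rev (map (stage_col i k) R))"
      unfolding u_def map_concat rev_map[symmetric]
      by (simp add: stage_col_not_row_le(3)[OF _ _ k] R cong: map_cong)
    moreover have "v = concat (rev (map (stage_col i k) L))"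
      unfolding v_def by (simp add: stage_col_row_le(1)[OF _ _ k(1)] L cong: map_cong)
    ultimately show "read_word (stage_tab i k T) = lower k u @ v"
      unfolding read_word_def stage_tab_def LR by simp
  qed
qed

lemma bzl_step:
  assumes "semistandard T" "1 \<le> k" "k \<le> i"
  shows "bzl_aux (k # rest) (stage_tab i (Suc k) T) = bold_a T k i # bzl_aux rest (stage_tab i k T)"
proof -
  obtain u v where uv: "read_word (stage_tab i (Suc k) T) = u @ v" "k \<notin> set u"
    "plus_blocks (signature k v)" "count_letter (Suc k) u = bold_a T k i"
    "read_word (stage_tab i k T) = lower k u @ v"
    using stage_tab_word_split[OF assms] by blast
  have "map length (stage_tab i k T) = map length (stage_tab i (Suc k) T)"
    unfolding stage_tab_def by simp
  from eps_e_pow_special[OF uv(1,2,3) this uv(5)] show ?thesis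
    using uv(4) by (simp add: Let_def)
qed

section \<open>Closed form of the BZL path\<close>

text \<open>The values produced by block i of the long word: (bold_a T i i, ..., bold_a T 1 i).\<close>
definition bold_block :: "nat list list \<Rightarrow> nat \<Rightarrow> nat list" where
  "bold_block T i = map (\<lambda>k. bold_a T k i) (rev [1..<i+1])"

lemma bzl_partial_block:
  assumes "semistandard T" "k \<le> i"
  shows "bzl_aux (rev [1..<Suc k] @ rest) (stage_tab i (Suc k) T)
    = map (\<lambda>k'. bold_a T k' i) (rev [1..<Suc k]) @ bzl_aux rest (stage_tab i 1 T)"
  using assms(2)
proof (induction k)
  case (Suc k)
  have "rev [1..<Suc (Suc k)] @ rest = Suc k # (rev [1..<Suc k] @ rest)" by simp
  then show ?case using bzl_step[OF assms(1), of "Suc k" i] Suc by simp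
qed simp

lemma bzl_blocks:
  assumes "semistandard T"
  shows "bzl_aux (concat (map (\<lambda>k. rev [1..<k+1]) [1..<Suc n]) @ rest) T
    = concat (map (bold_block T) [1..<Suc n]) @ bzl_aux rest (stage_tab n 1 T)"
proof (induction n arbitrary: rest)
  case 0 then show ?case using stage_tab_start[OF assms] by simp
next
  case (Suc n)
  have "bzl_aux (concat (map (\<lambda>k. rev [1..<k+1]) [1..<Suc (Suc n)]) @ rest) T
     = bzl_aux (concat (map (\<lambda>k. rev [1..<k+1]) [1..<Suc n]) @ (rev [1..<Suc (Suc n)] @ rest)) T"
    by simp
  also have "\<dots> = concat (map (bold_block T) [1..<Suc n])
      @ bzl_aux (rev [1..<Suc (Suc n)] @ rest) (stage_tab (Suc n) (Suc (Suc n)) T)"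
    using Suc.IH stage_tab_block_end[OF assms, of n] by simp
  also have "\<dots> = concat (map (bold_block T) [1..<Suc n]) @ bold_block T (Suc n)
      @ bzl_aux rest (stage_tab (Suc n) 1 T)"
    using bzl_partial_block[OF assms, of "Suc n" "Suc n" rest] unfolding bold_block_def by simp
  finally show ?case by simp
qed

theorem bzl_closed_form:
  "semistandard T \<Longrightarrow> bzl r T = concat (map (bold_block T) [1..<Suc r])"
  using bzl_blocks[of T r "[]"] unfolding bzl_def long_word_def by simp

lemma length_bold_blocks: "2 * length (concat (map (bold_block T) [1..<i])) = i * (i - 1)"
proof (induction i)
  case (Suc i)
  have "length (concat (map (bold_block T) [1..<Suc i]))
      = length (concat (map (bold_block T) [1..<i])) + (if 1 \<le> i then i else 0)"
    by (simp add: bold_block_def)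
  then show ?case using Suc.IH by (cases i) (auto simp: algebra_simps)
qed simp

theorem bzl_entry_eq_bold_a:
  assumes "semistandard T" "1 \<le> j" "j \<le> i" "i \<le> r"
  shows "bzl_entry r T i j = bold_a T (i - j + 1) i"
proof -
  have split: "[1..<Suc r] = [1..<i] @ i # [Suc i..<Suc r]"
    using assms upt_add_eq_append[of 1 i "Suc r - i"] by (simp add: upt_rec[of i])
  define A where "A = concat (map (bold_block T) [1..<i])"
  have idx: "i * (i - 1) div 2 + j - 1 = length A + (j - 1)"
    using length_bold_blocks[of T i] assms unfolding A_def by simp
  have j: "j - 1 < length (bold_block T i)" using assms by (simp add: bold_block_def)
  have "rev [1..<i+1] ! (j - 1) = i - j + 1" using assms by (simp add: rev_nth del: upt_Suc)
  then show ?thesis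
    unfolding bzl_entry_def bzl_closed_form[OF assms(1)] split idx A_def
    using j by (simp add: nth_append bold_block_def)
qed

lemma col_heights_Suc: "col_heights (Suc r) m = replicate (m (Suc r)) (Suc r) @ col_heights r m"
  unfolding col_heights_def by simp

lemma col_heights_sorted: "sorted_wrt (\<ge>) (col_heights r m)"
proof (induction r)
  case 0 then show ?case by (simp add: col_heights_def)
next
  case (Suc r)
  have "x \<le> Suc r" if "x \<in> set (col_heights r m)" for x
    using that unfolding col_heights_def by auto
  moreover have "sorted_wrt (\<ge>) (replicate n (Suc r))" for n
    by (induction n) auto
  ultimately show ?case unfolding col_heights_Suc sorted_wrt_append using Suc by auto
qed

lemma SSYT_semistandard:
  assumes "T \<in> SSYT r m"
  shows "semistandard T"
proof -
  have ml: "map length T = col_heights r m" and e: "\<forall>c\<in>set T. \<forall>x\<in>set c. 1 \<le> x \<and> x \<le> r + 1"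
    and s: "\<forall>c\<in>set T. sorted_wrt (<) c"
    and rows: "\<forall>p. Suc p < length T \<longrightarrow> (\<forall>k < length (T ! Suc p). T ! p ! k \<le> T ! Suc p ! k)"
    using assms unfolding SSYT_def by blast+
  have "length (T ! Suc p) \<le> length (T ! p)" if "Suc p < length T" for p
  proof -
    have "col_heights r m ! Suc p \<le> col_heights r m ! p"
      using sorted_wrt_nth_less[OF col_heights_sorted, of p "Suc p" r m] that
        arg_cong[OF ml, of length] by simp
    then show ?thesis using ml that by (metis Suc_lessD nth_map)
  qed
  then show ?thesis unfolding semistandard_def using e s rows by blast
qed

theorem mainTheorem2:
  fixes r :: nat and l :: "nat \<Rightarrow> nat" and T :: "nat list list" and i j :: nat
  assumes "1 \<le> r"
    and "T \<in> SSYT r (\<lambda>k. l k + 1)"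
    and "1 \<le> j" and "j \<le> i" and "i \<le> r"
  shows "circled_CI r T i j \<longleftrightarrow> circled_CII T (i - j + 1) i"
proof -
  have T: "semistandard T" using SSYT_semistandard[OF assms(2)] .
  have a_ij: "bzl_entry r T i j = bold_a T (i - j + 1) i"
    using bzl_entry_eq_bold_a[OF T assms(3,4,5)] .
  show ?thesis
  proof (cases "j = i")
    case True
    have "bold_a T 0 i = 0" unfolding bold_a_def by (simp add: sum_list_eq_0_iff)
    then show ?thesis unfolding circled_CI_def circled_CII_def a_ij using True by simp
  next
    case False
    have "bzl_entry r T i (j + 1) = bold_a T (i - (j + 1) + 1) i"
      using bzl_entry_eq_bold_a[OF T _ _ assms(5), of "j + 1"] assms False by simp
    moreover have "i - (j + 1) + 1 = i - j + 1 - 1" using assms False by simp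
    ultimately show ?thesis unfolding circled_CI_def circled_CII_def a_ij using False by simp
  qed
qed

end
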